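(* For real numbers $Q_1,Q_2,\dots$ let $A_n$ be the adjacency matrix of the path on $n$ vertices $1,2,\dots,n$, let $H_n = A_n + \mathrm{diag}(Q_1,\dots,Q_n)$ and $p_n = p_n(x;Q_1,\dots,Q_n) = \det(xI_n - H_n)$ (with $p_0 = 1$, $p_{-1}=0$). Let $L_{2n}$ be the characteristic polynomial of $A_{2n} + \mathrm{diag}(Q_1,\dots,Q_n,Q_n,\dots,Q_1)$ and $L_{2n+1}$ that of $A_{2n+1} + \mathrm{diag}(Q_1,\dots,Q_n,Q_{n+1},Q_n,\dots,Q_1)$. Then (1) $p_n(x;Q_1,\dots,Q_n) = (x-Q_n)\,p_{n-1}(x;Q_1,\dots,Q_{n-1}) - p_{n-2}(x;Q_1,\dots,Q_{n-2})$; (2) $L_{2n} = (p_n + p_{n-1})(p_n - p_{n-1})$; (3) $L_{2n+1} = p_n\,(p_{n+1} - p_{n-1})$, where $p_{n+1} = p_{n+1}(x;Q_1,\dots,Q_{n+1})$. Moreover, in each of the factorizations (2) and (3), the roots of the first factor are eigenvalues of the corresponding symmetric-potential path Hamiltonian with eigenvectors $f$ satisfying $f(1) = -f(N) \neq 0$, and the roots of the second factor are eigenvalues with eigenvectors $f$ satisfying $f(1) = f(N)\neq 0$, where $N\in\{2n,2n+1\}$ is the last vertex of the path.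
   Context: Vertices of the path on $N$ vertices are labeled $1,\dots,N$ in order, so $1$ and $N$ are the endpoints. *)

theory Defs
  imports "Jordan_Normal_Form.Char_Poly"
begin

text \<open>Vertices 1..n of the path are stored 0-indexed: vertex k is index k-1.
  The potential Q is a function nat => real with Q k = Q_k (k >= 1).\<close>

definition path_adj :: "nat \<Rightarrow> real mat" where
  "path_adj n = mat n n (\<lambda>(i,j). if i + 1 = j \<or> j + 1 = i then 1 else 0)"

definition path_ham :: "nat \<Rightarrow> (nat \<Rightarrow> real) \<Rightarrow> real mat" where
  "path_ham n Q = path_adj n + mat n n (\<lambda>(i,j). if i = j then Q (i + 1) else 0)"

definition path_poly :: "(nat \<Rightarrow> real) \<Rightarrow> int \<Rightarrow> real poly" where
  "path_poly Q k = (if k < 0 then 0 else char_poly (path_ham (nat k) Q))"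

text \<open>Symmetric potential on the path with N vertices: vertex k gets Q_(min k (N+1-k)),
  i.e. (Q_1..Q_n,Q_n..Q_1) for N = 2n and (Q_1..Q_n,Q_(n+1),Q_n..Q_1) for N = 2n+1.\<close>
definition sym_ham :: "nat \<Rightarrow> (nat \<Rightarrow> real) \<Rightarrow> real mat" where
  "sym_ham N Q = path_ham N (\<lambda>k. Q (min k (N + 1 - k)))"

end

(* The characteristic polynomial of a path Hamiltonian is the continuant of the linear polynomials
   x - Q_k on its diagonal; expanding the determinant along the last row gives the three-term
   recurrence (1). A continuant of a concatenation splits as
   K (xs @ ys) = K xs * K ys - K (butlast xs) * K (tl ys), and continuants are invariant under
   reversal; applied to the symmetric diagonal this gives the factorizations (2) and (3).
   For the eigenvectors, k \<mapsto> p_(k-1)(t) solves the eigenvalue equation on the half-infinite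
   path with value 0 at the fictitious vertex 0. Gluing it to its reflection across the middle of
   the path, with sign s = \<plusminus>1, gives an eigenvector of the symmetric Hamiltonian exactly when
   the two pieces match at the centre, which is the vanishing of the corresponding factor. *)

theory Submission
  imports Defs
begin

(* Minus sign instead of Euler's plus sign, matching tridiagonal determinants with off-diagonal
   entries -1 (det_tridiag). *)
fun continuant :: "'a::comm_ring_1 list \<Rightarrow> 'a" where
  "continuant [] = 1"
| "continuant [a] = a"
| "continuant (a # b # xs) = a * continuant (b # xs) - continuant xs"

lemma continuant_append:
  assumes "xs \<noteq> []" and "ys \<noteq> []"
  shows "continuant (xs @ ys) = continuant xs * continuant ys - continuant (butlast xs) * continuant (tl ys)"
  using assms
proof (induction xs rule: continuant.induct)
  case (2 a)
  then show ?case by (cases ys rule: continuant.cases) auto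
next
  case (3 a b xs)
  have IH: "continuant (b # xs @ ys) = continuant (b # xs) * continuant ys
      - continuant (butlast (b # xs)) * continuant (tl ys)"
    using "3.IH"(1) \<open>ys \<noteq> []\<close> by simp
  show ?case
  proof (cases "xs = []")
    case True
    then show ?thesis by (simp add: IH[unfolded True append_Nil] algebra_simps)
  next
    case False
    then show ?thesis by (simp add: IH "3.IH"(2)[OF False \<open>ys \<noteq> []\<close>] algebra_simps)
  qed
qed simp

lemma continuant_snoc:
  "xs \<noteq> [] \<Longrightarrow> continuant (xs @ [a]) = a * continuant xs - continuant (butlast xs)"
  using continuant_append[of xs "[a]"] by (simp add: mult.commute)

lemma continuant_rev: "continuant (rev xs) = continuant xs"
proof (induction xs rule: continuant.induct)
  case (3 a b xs)
  have "continuant (rev (a # b # xs)) = continuant ((rev xs @ [b]) @ [a])" by simp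
  also have "\<dots> = continuant (rev (b # xs)) * a - continuant (rev xs)"
    by (subst continuant_append) (auto simp: butlast_append)
  finally show ?case using 3 by (simp add: algebra_simps)
qed simp_all

definition tridiag :: "'a::comm_ring_1 list \<Rightarrow> 'a mat" where
  "tridiag ds = mat (length ds) (length ds)
     (\<lambda>(i, j). if i = j then ds ! i else if i + 1 = j \<or> j + 1 = i then -1 else 0)"

lemma mat_delete_tridiag_snoc: "mat_delete (tridiag (ds @ [a])) (length ds) (length ds) = tridiag ds"
  by (rule eq_matI) (auto simp: tridiag_def mat_delete_def nth_append)

lemma det_tridiag_snoc2:
  "det (tridiag (ds @ [a, b])) = b * det (tridiag (ds @ [a])) - det (tridiag ds)"
proof -
  define k where "k = length ds"
  define M where "M = tridiag (ds @ [a, b])"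
  have M: "M \<in> carrier_mat (Suc (Suc k)) (Suc (Suc k))" by (simp add: M_def k_def tridiag_def)
  have "det M = (\<Sum>j<Suc (Suc k). M $$ (Suc k, j) * cofactor M (Suc k) j)"
    by (rule laplace_expansion_row[OF M]) simp
  also have "\<dots> = M $$ (Suc k, Suc k) * cofactor M (Suc k) (Suc k)
      + M $$ (Suc k, k) * cofactor M (Suc k) k + (\<Sum>j<k. M $$ (Suc k, j) * cofactor M (Suc k) j)"
    by (simp add: algebra_simps)
  also have "(\<Sum>j<k. M $$ (Suc k, j) * cofactor M (Suc k) j) = 0"
    by (intro sum.neutral) (auto simp: M_def k_def tridiag_def)
  also have "M $$ (Suc k, Suc k) = b" by (simp add: M_def k_def tridiag_def nth_append)
  also have "M $$ (Suc k, k) = -1" by (simp add: M_def k_def tridiag_def)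
  also have "cofactor M (Suc k) (Suc k) = det (tridiag (ds @ [a]))"
    using mat_delete_tridiag_snoc[of "ds @ [a]" b] by (simp add: cofactor_def M_def k_def)
  also have "cofactor M (Suc k) k = det (tridiag ds)"
  proof -
    define D where "D = mat_delete M (Suc k) k"
    have D: "D \<in> carrier_mat (Suc k) (Suc k)" unfolding D_def using mat_delete_carrier[OF M] by simp
    \<comment> \<open>the last column of \<open>D\<close> has a single nonzero entry, the super-diagonal \<open>-1\<close> of \<open>M\<close>\<close>
    have "det D = (\<Sum>i<Suc k. D $$ (i, k) * cofactor D i k)"
      by (rule laplace_expansion_column[OF D]) simp
    also have "\<dots> = D $$ (k, k) * cofactor D k k + (\<Sum>i<k. D $$ (i, k) * cofactor D i k)"
      by simp
    also have "(\<Sum>i<k. D $$ (i, k) * cofactor D i k) = 0"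
      by (intro sum.neutral) (auto simp: D_def M_def k_def tridiag_def mat_delete_def)
    also have "D $$ (k, k) = -1" by (simp add: D_def M_def k_def tridiag_def mat_delete_def)
    finally have "det D = - cofactor D k k" by simp
    moreover have "mat_delete D k k = tridiag ds"
      by (rule eq_matI) (auto simp: D_def M_def k_def tridiag_def mat_delete_def nth_append)
    ultimately show ?thesis by (simp add: cofactor_def D_def)
  qed
  finally show ?thesis by (simp add: M_def)
qed

lemma det_tridiag_rev: "det (tridiag (rev xs)) = continuant xs"
proof (induction xs rule: continuant.induct)
  case 1
  then show ?case by (simp add: tridiag_def det_def)
next
  case (2 a)
  have "tridiag [a] = mat 1 1 (\<lambda>_. a)" by (rule eq_matI) (auto simp: tridiag_def)
  then show ?case by (simp add: det_def)
next
  case (3 a b xs)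
  then show ?case using det_tridiag_snoc2[of "rev xs" b a] by simp
qed

lemma det_tridiag: "det (tridiag ds) = continuant ds"
  using det_tridiag_rev[of "rev ds"] by (simp add: continuant_rev)

definition path_diag :: "(nat \<Rightarrow> real) \<Rightarrow> nat \<Rightarrow> real poly list" where
  "path_diag V k = map (\<lambda>i. [:- V (Suc i), 1:]) [0..<k]"

lemma path_diag_Suc: "path_diag V (Suc k) = path_diag V k @ [[:- V (Suc k), 1:]]"
  by (simp add: path_diag_def)

lemma path_diag_Suc_neq_Nil [simp]: "path_diag V (Suc k) \<noteq> []"
  by (simp add: path_diag_def)

lemma butlast_path_diag [simp]: "butlast (path_diag V (Suc k)) = path_diag V k"
  by (simp add: path_diag_Suc)

lemma char_poly_path_ham: "char_poly (path_ham k V) = continuant (path_diag V k)"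
proof -
  have "char_poly_matrix (path_ham k V) = tridiag (path_diag V k)"
    by (rule eq_matI)
      (auto simp: char_poly_matrix_def path_ham_def path_adj_def tridiag_def path_diag_def)
  then show ?thesis by (simp add: char_poly_def det_tridiag)
qed

lemma path_poly_of_nat: "path_poly Q (int k) = continuant (path_diag Q k)"
  by (simp add: path_poly_def char_poly_path_ham)

lemma path_poly_rec:
  assumes "n \<ge> 1"
  shows "path_poly Q (int n) = [:- Q n, 1:] * path_poly Q (int n - 1) - path_poly Q (int n - 2)"
proof (cases "n = 1")
  case True
  then show ?thesis by (simp add: path_poly_def char_poly_path_ham path_diag_def)
next
  case False
  with assms obtain k where k: "n = Suc (Suc k)" by (cases n; cases "n - 1") auto
  have "int n - 1 = int (Suc k)" "int n - 2 = int k" using k by auto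
  then have "path_poly Q (int n - 1) = continuant (path_diag Q (Suc k))"
    and "path_poly Q (int n - 2) = continuant (path_diag Q k)"
    by (simp_all only: path_poly_of_nat)
  moreover have "path_poly Q (int n) = continuant (path_diag Q (Suc k) @ [[:- Q n, 1:]])"
    unfolding path_poly_of_nat k path_diag_Suc[of Q "Suc k"] ..
  ultimately show ?thesis
    using continuant_snoc[of "path_diag Q (Suc k)" "[:- Q n, 1:]"] by simp
qed

lemma poly_path_poly_neighbours_of_root:
  assumes "poly (path_poly Q (int n)) t = 0"
  shows "poly (path_poly Q (int n - 1)) t = - poly (path_poly Q (int n + 1)) t"
proof -
  have "path_poly Q (int n + 1) = [:- Q (Suc n), 1:] * path_poly Q (int n) - path_poly Q (int n - 1)"
    using path_poly_rec[of "Suc n" Q] by (simp add: add.commute)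
  then show ?thesis using assms by simp
qed

lemma path_diag_symmetric:
  assumes "m \<le> n" and "n \<le> Suc m"
  shows "path_diag (\<lambda>k. Q (min k (n + m + 1 - k))) (n + m) = path_diag Q n @ rev (path_diag Q m)"
  using assms
  by (intro nth_equalityI) (auto simp: path_diag_def nth_append rev_nth intro!: arg_cong[where f = Q])

lemma continuant_path_diag_append_rev:
  "continuant (path_diag V (Suc n) @ rev (path_diag V (Suc m)))
    = continuant (path_diag V (Suc n)) * continuant (path_diag V (Suc m))
      - continuant (path_diag V n) * continuant (path_diag V m)"
  using butlast_rev[of "rev (path_diag V (Suc m))"]
  by (simp add: continuant_append continuant_rev)

lemma char_poly_sym_ham_even:
  assumes "n \<ge> 1"
  shows "char_poly (sym_ham (2*n) Q)
    = (path_poly Q (int n) + path_poly Q (int n - 1)) * (path_poly Q (int n) - path_poly Q (int n - 1))"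
proof -
  obtain m where n: "n = Suc m" using assms by (cases n) auto
  have "char_poly (sym_ham (2*n) Q) = continuant (path_diag Q n @ rev (path_diag Q n))"
    using path_diag_symmetric[of n n Q] by (simp add: sym_ham_def char_poly_path_ham mult_2)
  also have "\<dots> = path_poly Q (int n) * path_poly Q (int n) - path_poly Q (int m) * path_poly Q (int m)"
    unfolding n continuant_path_diag_append_rev path_poly_of_nat ..
  finally show ?thesis
    by (simp add: n square_diff_square_factored)
qed

lemma char_poly_sym_ham_odd:
  "char_poly (sym_ham (2*n+1) Q) = path_poly Q (int n) * (path_poly Q (int n + 1) - path_poly Q (int n - 1))"
proof (cases n)
  case 0
  then show ?thesis by (simp add: sym_ham_def char_poly_path_ham path_poly_def path_diag_def)
next
  case (Suc m)
  have "char_poly (sym_ham (2*n+1) Q) = continuant (path_diag Q (Suc n) @ rev (path_diag Q n))"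
    using path_diag_symmetric[of n "Suc n" Q] by (simp add: sym_ham_def char_poly_path_ham mult_2)
  also have "\<dots> = path_poly Q (int (Suc n)) * path_poly Q (int n) - path_poly Q (int n) * path_poly Q (int m)"
    unfolding Suc continuant_path_diag_append_rev path_poly_of_nat ..
  finally show ?thesis
    by (simp add: Suc algebra_simps)
qed

lemma path_ham_mult_vec:
  assumes "G 0 = 0" and "G (Suc N) = 0" and "i < N"
  shows "(path_ham N V *\<^sub>v vec N (\<lambda>j. G (Suc j))) $ i
    = G i + G (Suc (Suc i)) + V (Suc i) * G (Suc i)"
proof -
  have "(path_ham N V *\<^sub>v vec N (\<lambda>j. G (Suc j))) $ i =
     (\<Sum>j<N. (if Suc j = i then G i else 0) + (if j = Suc i then G (Suc (Suc i)) else 0)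
        + (if j = i then V (Suc i) * G (Suc i) else 0))"
    using assms(3) unfolding path_ham_def path_adj_def
    by (auto simp: scalar_prod_def lessThan_atLeast0 intro!: sum.cong)
  also have "\<dots> = G i + G (Suc (Suc i)) + V (Suc i) * G (Suc i)"
    using assms by (cases i; cases "Suc i = N") (auto simp: sum.distrib)
  finally show ?thesis .
qed

lemma eigenvector_path_ham:
  assumes "0 < N" and "G 0 = 0" and "G (Suc N) = 0" and "G 1 \<noteq> 0"
    and "\<And>k. k < N \<Longrightarrow> G k + G (Suc (Suc k)) + V (Suc k) * G (Suc k) = t * G (Suc k)"
  shows "eigenvector (path_ham N V) (vec N (\<lambda>j. G (Suc j))) t"
proof -
  have dim: "dim_row (path_ham N V) = N" by (simp add: path_ham_def path_adj_def)
  have "path_ham N V *\<^sub>v vec N (\<lambda>j. G (Suc j)) = t \<cdot>\<^sub>v vec N (\<lambda>j. G (Suc j))"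
  proof (rule eq_vecI)
    fix i assume "i < dim_vec (t \<cdot>\<^sub>v vec N (\<lambda>j. G (Suc j)))"
    then have i: "i < N" by simp
    show "(path_ham N V *\<^sub>v vec N (\<lambda>j. G (Suc j))) $ i = (t \<cdot>\<^sub>v vec N (\<lambda>j. G (Suc j))) $ i"
      using path_ham_mult_vec[OF assms(2,3) i] assms(5)[OF i] i by simp
  qed (simp add: dim)
  moreover have "vec N (\<lambda>j. G (Suc j)) \<noteq> 0\<^sub>v N"
    using assms(1,4) by (metis index_vec index_zero_vec(1) One_nat_def)
  ultimately show ?thesis unfolding eigenvector_def dim by simp
qed

lemma mirrored_solution_eq:
  fixes u G :: "nat \<Rightarrow> real"
  assumes eq: "\<And>k. u k + u (Suc (Suc k)) + Q (Suc k) * u (Suc k) = t * u (Suc k)"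
    and N: "N = 2*n \<or> N = 2*n + 1"
    and left: "\<And>j. j \<le> Suc n \<Longrightarrow> G j = u j"
    and right: "\<And>j. n \<le> j \<Longrightarrow> G j = s * u (Suc N - j)"
    and k: "k < N"
  shows "G k + G (Suc (Suc k)) + Q (min (Suc k) (N - k)) * G (Suc k) = t * G (Suc k)"
proof (cases "k < n")
  case True
  then have "min (Suc k) (N - k) = Suc k" using N by auto
  with True show ?thesis using eq[of k] by (simp add: left)
next
  case False
  define j where "j = N - Suc k"
  have G: "G k = s * u (Suc (Suc j))" "G (Suc k) = s * u (Suc j)" "G (Suc (Suc k)) = s * u j"
  proof -
    have "Suc N - k = Suc (Suc j)" "Suc N - Suc k = Suc j" "Suc N - Suc (Suc k) = j"
      using k by (auto simp: j_def)
    then show "G k = s * u (Suc (Suc j))" "G (Suc k) = s * u (Suc j)" "G (Suc (Suc k)) = s * u j"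
      using right[of k] right[of "Suc k"] right[of "Suc (Suc k)"] False k by simp_all
  qed
  have "min (Suc k) (N - k) = Suc j" using False N k by (auto simp: j_def)
  then show ?thesis
    using arg_cong[OF eq[of j], of "(*) s"] by (simp add: G algebra_simps)
qed

lemma sym_ham_eigenvector:
  fixes u :: "nat \<Rightarrow> real"
  assumes eq: "\<And>k. u k + u (Suc (Suc k)) + Q (Suc k) * u (Suc k) = t * u (Suc k)"
    and u0: "u 0 = 0" and u1: "u 1 = 1"
    and N: "N = 2*n \<or> N = 2*n + 1" and "0 < N"
    and match_left: "s * u (N - n) = u (Suc n)" and match_right: "u n = s * u (Suc N - n)"
  shows "\<exists>f. eigenvector (sym_ham N Q) f t \<and> f $ 0 = 1 \<and> f $ (N - 1) = s"
proof -
  define G where "G j = (if j \<le> n then u j else s * u (Suc N - j))" for j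
  have left: "G j = u j" if "j \<le> Suc n" for j
    using that match_left by (cases "j = Suc n") (auto simp: G_def)
  have right: "G j = s * u (Suc N - j)" if "n \<le> j" for j
    using that match_right by (cases "j = n") (auto simp: G_def)
  have "eigenvector (path_ham N (\<lambda>k. Q (min k (N + 1 - k)))) (vec N (\<lambda>j. G (Suc j))) t"
  proof (rule eigenvector_path_ham)
    show "G 0 = 0" "G 1 \<noteq> 0" using left[of 0] left[of 1] u0 u1 by simp_all
    show "G (Suc N) = 0" using N u0 by (subst right) auto
    show "G k + G (Suc (Suc k)) + Q (min (Suc k) (N + 1 - Suc k)) * G (Suc k) = t * G (Suc k)"
      if "k < N" for k
      using mirrored_solution_eq[where u = u and Q = Q, OF eq N left right that] by simp
  qed fact
  moreover have "G 1 = 1" "G N = s" using left[of 1] right[of N] u1 N by auto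
  ultimately show ?thesis
    using \<open>0 < N\<close> by (intro exI[of _ "vec N (\<lambda>j. G (Suc j))"]) (simp add: sym_ham_def)
qed

(* Value at vertex k of the solution of (H - t) f = 0 on the half-infinite path with f 0 = 0,
   f 1 = 1. *)
definition dirichlet_solution :: "(nat \<Rightarrow> real) \<Rightarrow> real \<Rightarrow> nat \<Rightarrow> real" where
  "dirichlet_solution Q t k = poly (path_poly Q (int k - 1)) t"

lemma dirichlet_solution_0 [simp]: "dirichlet_solution Q t 0 = 0"
  by (simp add: dirichlet_solution_def path_poly_def)

lemma dirichlet_solution_Suc: "dirichlet_solution Q t (Suc k) = poly (path_poly Q (int k)) t"
  by (simp add: dirichlet_solution_def)

lemma dirichlet_solution_1 [simp]: "dirichlet_solution Q t 1 = 1"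
  by (simp add: dirichlet_solution_def path_poly_def char_poly_path_ham path_diag_def)

lemma dirichlet_solution_eq:
  "dirichlet_solution Q t k + dirichlet_solution Q t (Suc (Suc k)) + Q (Suc k) * dirichlet_solution Q t (Suc k)
    = t * dirichlet_solution Q t (Suc k)"
proof -
  have "int (Suc k) - 2 = int k - 1" by simp
  then show ?thesis
    using arg_cong[OF path_poly_rec[of "Suc k" Q], of "\<lambda>p. poly p t"]
    by (simp add: dirichlet_solution_def algebra_simps)
qed

lemma sym_ham_eigenvector_even:
  assumes "n \<ge> 1" and "s = 1 \<or> s = -1"
    and "poly (path_poly Q (int n)) t = s * poly (path_poly Q (int n - 1)) t"
  shows "\<exists>f. eigenvector (sym_ham (2*n) Q) f t \<and> f $ 0 = 1 \<and> f $ (2*n - 1) = s"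
proof (rule sym_ham_eigenvector[OF dirichlet_solution_eq dirichlet_solution_0 dirichlet_solution_1])
  show "s * dirichlet_solution Q t (2*n - n) = dirichlet_solution Q t (Suc n)"
    using assms(3) by (simp add: dirichlet_solution_Suc dirichlet_solution_def)
  then show "dirichlet_solution Q t n = s * dirichlet_solution Q t (Suc (2*n) - n)"
    using assms(2) by (auto simp: Suc_diff_le)
qed (use assms(1) in auto)

lemma sym_ham_eigenvector_odd:
  assumes "s * poly (path_poly Q (int n)) t = poly (path_poly Q (int n)) t"
    and "poly (path_poly Q (int n - 1)) t = s * poly (path_poly Q (int n + 1)) t"
  shows "\<exists>f. eigenvector (sym_ham (2*n + 1) Q) f t \<and> f $ 0 = 1 \<and> f $ (2*n) = s"
proof -
  have "\<exists>f. eigenvector (sym_ham (2*n + 1) Q) f t \<and> f $ 0 = 1 \<and> f $ (2*n + 1 - 1) = s"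
  proof (rule sym_ham_eigenvector[OF dirichlet_solution_eq dirichlet_solution_0 dirichlet_solution_1])
    show "s * dirichlet_solution Q t (2*n + 1 - n) = dirichlet_solution Q t (Suc n)"
      using assms(1) by (simp add: dirichlet_solution_Suc)
    show "dirichlet_solution Q t n = s * dirichlet_solution Q t (Suc (2*n + 1) - n)"
      using assms(2) by (simp add: dirichlet_solution_def Suc_diff_le add.commute)
  qed auto
  then show ?thesis by simp
qed

theorem lemma2:
  fixes Q :: "nat \<Rightarrow> real"
  shows
   "(\<forall>n::nat. n \<ge> 1 \<longrightarrow>
        path_poly Q (int n) = [:- Q n, 1:] * path_poly Q (int n - 1) - path_poly Q (int n - 2))
  \<and> (\<forall>n::nat. n \<ge> 1 \<longrightarrow>
        char_poly (sym_ham (2*n) Q)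
          = (path_poly Q (int n) + path_poly Q (int n - 1)) * (path_poly Q (int n) - path_poly Q (int n - 1))
      \<and> (\<forall>t. poly (path_poly Q (int n) + path_poly Q (int n - 1)) t = 0 \<longrightarrow>
            (\<exists>f. eigenvector (sym_ham (2*n) Q) f t \<and> f $ 0 = - (f $ (2*n - 1)) \<and> f $ 0 \<noteq> 0))
      \<and> (\<forall>t. poly (path_poly Q (int n) - path_poly Q (int n - 1)) t = 0 \<longrightarrow>
            (\<exists>f. eigenvector (sym_ham (2*n) Q) f t \<and> f $ 0 = f $ (2*n - 1) \<and> f $ 0 \<noteq> 0)))
  \<and> (\<forall>n::nat.
        char_poly (sym_ham (2*n+1) Q)
          = path_poly Q (int n) * (path_poly Q (int n + 1) - path_poly Q (int n - 1))
      \<and> (\<forall>t. poly (path_poly Q (int n)) t = 0 \<longrightarrow>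
            (\<exists>f. eigenvector (sym_ham (2*n+1) Q) f t \<and> f $ 0 = - (f $ (2*n)) \<and> f $ 0 \<noteq> 0))
      \<and> (\<forall>t. poly (path_poly Q (int n + 1) - path_poly Q (int n - 1)) t = 0 \<longrightarrow>
            (\<exists>f. eigenvector (sym_ham (2*n+1) Q) f t \<and> f $ 0 = f $ (2*n) \<and> f $ 0 \<noteq> 0)))"
proof (intro conjI allI impI, goal_cases)
  case (1 n)
  then show ?case by (rule path_poly_rec)
next
  case (2 n)
  then show ?case by (rule char_poly_sym_ham_even)
next
  case (3 n t)
  then show ?case using sym_ham_eigenvector_even[of n "-1" Q t] by (auto simp: eq_neg_iff_add_eq_0)
next
  case (4 n t)
  then show ?case using sym_ham_eigenvector_even[of n 1 Q t] by auto
next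
  case (5 n)
  show ?case by (rule char_poly_sym_ham_odd)
next
  case (6 n t)
  then show ?case
    using sym_ham_eigenvector_odd[of "-1" Q n t] poly_path_poly_neighbours_of_root by auto
next
  case (7 n t)
  then show ?case using sym_ham_eigenvector_odd[of 1 Q n t] by auto
qed
end
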